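(* Let $\mathfrak{g}$ be a finite-dimensional complex Lie algebra, let $I$ be an ideal of $\mathfrak{g}$ such that $\mathfrak{g}/I$ is abelian, and let $\mathfrak{z}=Z(I)$ be the center of $I$. Then every $1$-cocycle $f\in Z^1(\mathfrak{g}/I,\mathfrak{z})$ defines an associative nil-inner CPA-structure on $\mathfrak{g}$ by $x\cdot y=[f(\overline{x}),y]$ for all $x,y\in\mathfrak{g}$, where $\overline{x}$ denotes the image of $x$ in $\mathfrak{g}/I$.
   Context: $\mathfrak{z}$ is an ideal of $\mathfrak{g}$ and $\mathfrak{g}/I$ acts on $\mathfrak{z}$ by $\overline{x}\circ z=[x,z]$. $Z^1(\mathfrak{g}/I,\mathfrak{z})$ is the space of linear maps $f:\mathfrak{g}/I\to\mathfrak{z}$ with $f([\overline{x},\overline{y}])=\overline{x}\circ f(\overline{y})-\overline{y}\circ f(\overline{x})$. A CPA-structure on $\mathfrak{g}$ is a bilinear product $x\cdot y$ satisfying, for all $x,y,z$: $x\cdot y=y\cdot x$; $[x,y]\cdot z=x\cdot(y\cdot z)-y\cdot(x\cdot z)$; $x\cdot[y,z]=[x\cdot y,z]+[y,x\cdot z]$. It is nil-inner if $x\cdot y=[\phi(x),y]$ for some nilpotent Lie algebra homomorphism $\phi:\mathfrak{g}\to\mathfrak{g}$; associative means $(x\cdot y)\cdot z=x\cdot(y\cdot z)$. *)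

theory Defs
  imports Complex_Main
begin

text \<open>A complex vector space is a type 'a with an abstract scalar multiplication
  sc :: complex => 'a => 'a satisfying the vector space axioms; the Lie algebra g is
  the whole type 'a, with bracket br.\<close>

definition fin_dim :: "(complex \<Rightarrow> 'a::ab_group_add \<Rightarrow> 'a) \<Rightarrow> bool" where
  "fin_dim sc \<longleftrightarrow> (\<exists>B. finite B \<and> module.span sc B = UNIV)"

definition bilinear_map ::
  "(complex \<Rightarrow> 'a::ab_group_add \<Rightarrow> 'a) \<Rightarrow> ('a \<Rightarrow> 'a \<Rightarrow> 'a) \<Rightarrow> bool" where
  "bilinear_map sc p \<longleftrightarrow>
     (\<forall>x. Vector_Spaces.linear sc sc (p x)) \<and> (\<forall>y. Vector_Spaces.linear sc sc (\<lambda>x. p x y))"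

definition lie_algebra :: "(complex \<Rightarrow> 'a::ab_group_add \<Rightarrow> 'a) \<Rightarrow> ('a \<Rightarrow> 'a \<Rightarrow> 'a) \<Rightarrow> bool" where
  "lie_algebra sc br \<longleftrightarrow> vector_space sc \<and> bilinear_map sc br \<and>
     (\<forall>x. br x x = 0) \<and>
     (\<forall>x y z. br x (br y z) + br y (br z x) + br z (br x y) = 0)"

definition lie_ideal :: "(complex \<Rightarrow> 'a::ab_group_add \<Rightarrow> 'a) \<Rightarrow> ('a \<Rightarrow> 'a \<Rightarrow> 'a) \<Rightarrow> 'a set \<Rightarrow> bool" where
  "lie_ideal sc br I \<longleftrightarrow> module.subspace sc I \<and> (\<forall>x i. i \<in> I \<longrightarrow> br x i \<in> I)"

text \<open>The coset x + I, i.e. the image of x in g/I.\<close>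
definition coset :: "'a set \<Rightarrow> 'a::ab_group_add \<Rightarrow> 'a set" where
  "coset I x = (\<lambda>i. x + i) ` I"

text \<open>g/I abelian: [xbar, ybar] = [x,y] + I is the zero coset 0 + I.\<close>
definition abelian_quotient :: "('a \<Rightarrow> 'a \<Rightarrow> 'a) \<Rightarrow> 'a::ab_group_add set \<Rightarrow> bool" where
  "abelian_quotient br I \<longleftrightarrow> (\<forall>x y. coset I (br x y) = coset I 0)"

definition center_of :: "('a \<Rightarrow> 'a \<Rightarrow> 'a) \<Rightarrow> 'a::ab_group_add set \<Rightarrow> 'a set" where
  "center_of br I = {z \<in> I. \<forall>i\<in>I. br i z = 0}"

text \<open>Z^1(g/I, z): linear maps f : g/I -> z (given on cosets) with
  f([xbar,ybar]) = xbar o f(ybar) - ybar o f(xbar), where xbar o z = [x,z]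
  and [xbar,ybar] = [x,y] + I, xbar + ybar = (x+y) + I, c xbar = (c x) + I.\<close>
definition cocycle1 ::
  "(complex \<Rightarrow> 'a::ab_group_add \<Rightarrow> 'a) \<Rightarrow> ('a \<Rightarrow> 'a \<Rightarrow> 'a) \<Rightarrow> 'a set \<Rightarrow> 'a set \<Rightarrow> ('a set \<Rightarrow> 'a) \<Rightarrow> bool" where
  "cocycle1 sc br I Z f \<longleftrightarrow>
     (\<forall>x. f (coset I x) \<in> Z) \<and>
     (\<forall>x y. f (coset I (x + y)) = f (coset I x) + f (coset I y)) \<and>
     (\<forall>c x. f (coset I (sc c x)) = sc c (f (coset I x))) \<and>
     (\<forall>x y. f (coset I (br x y)) = br x (f (coset I y)) - br y (f (coset I x)))"

definition cpa_structure :: "(complex \<Rightarrow> 'a::ab_group_add \<Rightarrow> 'a) \<Rightarrow> ('a \<Rightarrow> 'a \<Rightarrow> 'a) \<Rightarrow> ('a \<Rightarrow> 'a \<Rightarrow> 'a) \<Rightarrow> bool" where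
  "cpa_structure sc br p \<longleftrightarrow> bilinear_map sc p \<and>
     (\<forall>x y. p x y = p y x) \<and>
     (\<forall>x y z. p (br x y) z = p x (p y z) - p y (p x z)) \<and>
     (\<forall>x y z. p x (br y z) = br (p x y) z + br y (p x z))"

definition nil_inner :: "(complex \<Rightarrow> 'a::ab_group_add \<Rightarrow> 'a) \<Rightarrow> ('a \<Rightarrow> 'a \<Rightarrow> 'a) \<Rightarrow> ('a \<Rightarrow> 'a \<Rightarrow> 'a) \<Rightarrow> bool" where
  "nil_inner sc br p \<longleftrightarrow> (\<exists>\<phi>. Vector_Spaces.linear sc sc \<phi> \<and>
     (\<forall>x y. \<phi> (br x y) = br (\<phi> x) (\<phi> y)) \<and>
     (\<exists>n. \<forall>x. (\<phi> ^^ n) x = 0) \<and>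
     (\<forall>x y. p x y = br (\<phi> x) y))"

definition associative_product :: "('a \<Rightarrow> 'a \<Rightarrow> 'a) \<Rightarrow> bool" where
  "associative_product p \<longleftrightarrow> (\<forall>x y z. p (p x y) z = p x (p y z))"

end

theory Submission
  imports Defs
begin

text \<open>Since \<open>g/I\<close> is abelian, every bracket lies in \<open>I\<close>, so \<open>F x = f(x + I)\<close> kills brackets and
  its own values (which lie in \<open>Z(I) \<subseteq> I\<close>), and \<open>[F x, i] = 0\<close> for \<open>i \<in> I\<close>. The cocycle
  identity then reduces to \<open>[x, F y] = [y, F x]\<close>, which makes \<open>x \<cdot> y = [F x, y]\<close> commutative,
  and all products \<open>[F x, [F y, z]]\<close> vanish because \<open>[F y, z] \<in> I\<close>. Hence both sides of the
  second CPA axiom and of associativity are zero, the third CPA axiom is the Jacobi identity,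
  and \<open>F\<close> is a Lie algebra homomorphism with \<open>F\<^sup>2 = 0\<close>.\<close>

lemma lie_algebra_add_right:
  assumes "lie_algebra sc br" shows "br x (y + z) = br x y + br x z"
  using assms unfolding lie_algebra_def bilinear_map_def Vector_Spaces.linear_iff by blast

lemma lie_algebra_add_left:
  assumes "lie_algebra sc br" shows "br (x + y) z = br x z + br y z"
  using assms unfolding lie_algebra_def bilinear_map_def Vector_Spaces.linear_iff by blast

lemma lie_algebra_zero_right:
  assumes "lie_algebra sc br" shows "br x 0 = 0"
  using lie_algebra_add_right[OF assms, of x 0 0] by simp

lemma lie_algebra_zero_left:
  assumes "lie_algebra sc br" shows "br 0 x = 0"
  using lie_algebra_add_left[OF assms, of 0 0 x] by simp

lemma lie_algebra_minus_right:
  assumes "lie_algebra sc br" shows "br x (- y) = - br x y"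
  using lie_algebra_add_right[OF assms, of x y "- y"] lie_algebra_zero_right[OF assms]
  by (simp add: eq_neg_iff_add_eq_0 add.commute)

lemma lie_algebra_antisym:
  assumes "lie_algebra sc br" shows "br x y = - br y x"
proof -
  have alt: "br u u = 0" for u using assms unfolding lie_algebra_def by blast
  have "br x y + br y x = br x x + br y x + (br x y + br y y)" by (simp add: alt add.commute)
  also have "\<dots> = br (x + y) (x + y)"
    by (simp only: lie_algebra_add_left[OF assms] lie_algebra_add_right[OF assms])
  also have "\<dots> = 0" by (rule alt)
  finally show ?thesis by (simp add: eq_neg_iff_add_eq_0)
qed

lemma lie_algebra_derivation:
  assumes "lie_algebra sc br" shows "br a (br y z) = br (br a y) z + br y (br a z)"
proof -
  have "br a (br y z) + br y (br z a) + br z (br a y) = 0"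
    using assms unfolding lie_algebra_def by blast
  then show ?thesis
    using lie_algebra_antisym[OF assms, of z a] lie_algebra_antisym[OF assms, of z "br a y"]
      lie_algebra_minus_right[OF assms, of y "br a z"]
    by (simp add: algebra_simps)
qed

lemma coset_subspace_member:
  assumes "module sc" "module.subspace sc I" "i \<in> I"
  shows "coset I i = coset I 0"
proof -
  have add: "x + y \<in> I" if "x \<in> I" "y \<in> I" for x y
    using assms(1,2) that unfolding module.subspace_def[OF assms(1)] by blast
  have "- i \<in> I"
    using module.subspace_neg[OF assms(1,2,3)] .
  then have "y \<in> (+) i ` I" if "y \<in> I" for y
    using add[OF that] by (auto intro!: image_eqI[of y _ "y + - i"])
  then show ?thesis
    unfolding coset_def using add assms(3) by auto
qed

lemma abelian_quotient_bracket_mem: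
  assumes "abelian_quotient br I" "0 \<in> I"
  shows "br x y \<in> I"
proof -
  have "br x y + 0 \<in> coset I (br x y)" unfolding coset_def using assms(2) by blast
  then show ?thesis using assms(1) unfolding abelian_quotient_def coset_def by auto
qed

lemma cpa_structure_inner:
  assumes "lie_algebra sc br" "Vector_Spaces.linear sc sc \<phi>"
    and "\<And>x y. \<phi> (br x y) = 0"
    and "\<And>x y. br (\<phi> x) y = br (\<phi> y) x"
    and "\<And>x y z. br (\<phi> x) (br (\<phi> y) z) = 0"
  shows "cpa_structure sc br (\<lambda>x y. br (\<phi> x) y)"
  unfolding cpa_structure_def bilinear_map_def
proof (intro conjI allI)
  have linr: "Vector_Spaces.linear sc sc (br x)"
    and linl: "Vector_Spaces.linear sc sc (\<lambda>x. br x y)" for x y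
    using assms(1) unfolding lie_algebra_def bilinear_map_def by blast+
  show "Vector_Spaces.linear sc sc (br (\<phi> x))" for x by (rule linr)
  show "Vector_Spaces.linear sc sc (\<lambda>x. br (\<phi> x) y)" for y
    using Vector_Spaces.linear_compose[OF assms(2) linl[of y]] by (simp add: o_def)
  show "br (\<phi> (br x y)) z = br (\<phi> x) (br (\<phi> y) z) - br (\<phi> y) (br (\<phi> x) z)" for x y z
    by (simp add: assms(3,5) lie_algebra_zero_left[OF assms(1)])
  show "br (\<phi> x) (br y z) = br (br (\<phi> x) y) z + br y (br (\<phi> x) z)" for x y z
    by (rule lie_algebra_derivation[OF assms(1)])
qed (rule assms(4))

lemma nil_inner_square_zero:
  assumes "Vector_Spaces.linear sc sc \<phi>"
    and "\<And>x y. \<phi> (br x y) = 0" "\<And>x y. br (\<phi> x) (\<phi> y) = 0" "\<And>x. \<phi> (\<phi> x) = 0"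
  shows "nil_inner sc br (\<lambda>x y. br (\<phi> x) y)"
  unfolding nil_inner_def
proof (intro exI conjI allI)
  show "(\<phi> ^^ 2) x = 0" for x using assms(4) by (simp add: numeral_2_eq_2)
qed (simp_all add: assms(1-3))

lemma associative_product_inner:
  assumes "lie_algebra sc br"
    and "\<And>x y. \<phi> (br x y) = 0" "\<And>x y z. br (\<phi> x) (br (\<phi> y) z) = 0"
  shows "associative_product (\<lambda>x y. br (\<phi> x) y)"
  unfolding associative_product_def by (simp add: assms(2,3) lie_algebra_zero_left[OF assms(1)])

context
  fixes sc :: "complex \<Rightarrow> 'a::ab_group_add \<Rightarrow> 'a" and br I f
  assumes lie: "lie_algebra sc br"
    and ideal: "lie_ideal sc br I"
    and abelian: "abelian_quotient br I"
    and cocycle: "cocycle1 sc br I (center_of br I) f"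
begin

private lemma module: "module sc"
  using lie module_iff_vector_space unfolding lie_algebra_def by blast

private lemma subspace: "module.subspace sc I"
  using ideal unfolding lie_ideal_def by blast

private lemma bracket_mem: "br x y \<in> I"
  using abelian_quotient_bracket_mem[OF abelian module.subspace_0[OF module subspace]] .

lemma cocycle_mem_ideal: "f (coset I x) \<in> I"
  using cocycle unfolding cocycle1_def center_of_def by blast

lemma cocycle_bracket_ideal: "i \<in> I \<Longrightarrow> br (f (coset I x)) i = 0"
  using cocycle lie_algebra_antisym[OF lie, of "f (coset I x)" i]
  unfolding cocycle1_def center_of_def by force

lemma cocycle_vanishes_on_ideal: "i \<in> I \<Longrightarrow> f (coset I i) = 0"
  using coset_subspace_member[OF module subspace] cocycle
  unfolding cocycle1_def by (metis add_0 add_right_imp_eq)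

lemma cocycle_bracket_zero: "f (coset I (br x y)) = 0"
  using cocycle_vanishes_on_ideal[OF bracket_mem] .

lemma cocycle_square_zero: "f (coset I (f (coset I x))) = 0"
  using cocycle_vanishes_on_ideal[OF cocycle_mem_ideal] .

lemma cocycle_linear: "Vector_Spaces.linear sc sc (\<lambda>x. f (coset I x))"
  using cocycle lie unfolding cocycle1_def lie_algebra_def Vector_Spaces.linear_iff by blast

lemma cocycle_inner_commute: "br (f (coset I x)) y = br (f (coset I y)) x"
proof -
  have "br y (f (coset I x)) = br x (f (coset I y))"
    using cocycle cocycle_bracket_zero[of y x] unfolding cocycle1_def by simp
  then show ?thesis
    using lie_algebra_antisym[OF lie, of "f (coset I x)" y]
      lie_algebra_antisym[OF lie, of "f (coset I y)" x] by simp
qed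

lemma cocycle_inner_nested_zero: "br (f (coset I x)) (br (f (coset I y)) z) = 0"
  using cocycle_bracket_ideal[OF bracket_mem] .

end

theorem proposition4p1:
  fixes sc :: "complex \<Rightarrow> 'a::ab_group_add \<Rightarrow> 'a"
    and br :: "'a \<Rightarrow> 'a \<Rightarrow> 'a"
    and I :: "'a set"
    and f :: "'a set \<Rightarrow> 'a"
  assumes "lie_algebra sc br"
    and "fin_dim sc"
    and "lie_ideal sc br I"
    and "abelian_quotient br I"
    and "cocycle1 sc br I (center_of br I) f"
  shows "cpa_structure sc br (\<lambda>x y. br (f (coset I x)) y)
       \<and> nil_inner sc br (\<lambda>x y. br (f (coset I x)) y)
       \<and> associative_product (\<lambda>x y. br (f (coset I x)) y)"
proof -
  note setting = assms(1,3,4,5)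
  have "cpa_structure sc br (\<lambda>x y. br (f (coset I x)) y)"
    by (rule cpa_structure_inner[OF assms(1) cocycle_linear[OF setting]
          cocycle_bracket_zero[OF setting] cocycle_inner_commute[OF setting]
          cocycle_inner_nested_zero[OF setting]])
  moreover have "nil_inner sc br (\<lambda>x y. br (f (coset I x)) y)"
    by (rule nil_inner_square_zero[where \<phi> = "\<lambda>x. f (coset I x)" and br = br, OF cocycle_linear[OF setting] cocycle_bracket_zero[OF setting]
          cocycle_bracket_ideal[OF setting cocycle_mem_ideal[OF setting]]
          cocycle_square_zero[OF setting]])
  moreover have "associative_product (\<lambda>x y. br (f (coset I x)) y)"
    by (rule associative_product_inner[where \<phi> = "\<lambda>x. f (coset I x)", OF assms(1) cocycle_bracket_zero[OF setting]
          cocycle_inner_nested_zero[OF setting]])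
  ultimately show ?thesis by blast
qed

end
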